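(* Let $H_i$ ($i\in\mathbb{N}$) and $H$ be continuous functions $[0,T]\times\mathbb{R}^n\times\mathbb{R}^n\to\mathbb{R}$, each satisfying (H1)–(H4) and (HLC). Let $(\mathbb{R}^{n+1},f_i,l_i)$ and $(\mathbb{R}^{n+1},f,l)$ be the Steiner representations of $H_i$ and $H$, respectively (as defined in the context). If $H_i$ converge to $H$ uniformly on compact subsets of $[0,T]\times\mathbb{R}^n\times\mathbb{R}^n$, then $f_i\to f$ and $l_i\to l$ uniformly on compact subsets of $[0,T]\times\mathbb{R}^n\times\mathbb{R}^{n+1}$.
   Context: Hypotheses on a function $H:[0,T]\times\mathbb{R}^n\times\mathbb{R}^n\to\mathbb{R}$: (H1) $H(\cdot,x,p)$ Lebesgue measurable; (H2) $H(t,\cdot,\cdot)$ continuous; (H3) $H(t,x,\cdot)$ convex; (H4) there is a measurable $c\ge0$ with $|H(t,x,p)-H(t,x,q)|\le c(t)(1+|x|)|p-q|$; (HLC) for every $R>0$ there is a measurable $k_R\ge0$ with $|H(t,x,p)-H(t,y,p)|\le k_R(t)(1+|p|)|x-y|$ for $x,y$ in the closed ball $\bar B_R$ of radius $R$ about $0$ and all $p$. $H^*(t,x,v)=\sup_p\{\langle v,p\rangle-H(t,x,p)\}$. Steiner representation of $H$: for $(t,x)$ let $E(t,x)=\mathrm{epi}\,H^*(t,x,\cdot)=\{(v,\eta)\in\mathbb{R}^n\times\mathbb{R}:H^*(t,x,v)\le\eta\}$ (a nonempty closed convex set). For $a\in\mathbb{R}^{n+1}$ put $\Phi(t,x,a)=E(t,x)\cap\bar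 B(a,2d(a,E(t,x)))$, where $d(a,K)=\inf_{\xi\in K}|a-\xi|$ and $\bar B(a,r)$ is the closed ball. For a nonempty compact convex $K\subset\mathbb{R}^m$ its Steiner point is $s_m(K)=m\int_{S^{m-1}}p\,\sigma(K,p)\,\mu(dp)$, with $\sigma(K,p)=\max_{y\in K}\langle p,y\rangle$ and $\mu$ the rotation-invariant probability measure on the unit sphere $S^{m-1}$. Set $e(t,x,a)=s_{n+1}(\Phi(t,x,a))$ and write $e(t,x,a)=(f(t,x,a),l(t,x,a))$ with $f\in\mathbb{R}^n$, $l\in\mathbb{R}$. *)

theory Defs
  imports "HOL-Analysis.Analysis"
begin

text \<open>R^n is modelled by a Euclidean space type 'a, R^(n+1) by 'a \<times> real.\<close>

definition conjH :: "(real \<Rightarrow> 'a::euclidean_space \<Rightarrow> 'a \<Rightarrow> real) \<Rightarrow> real \<Rightarrow> 'a \<Rightarrow> 'a \<Rightarrow> ereal" where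
  "conjH H t x v = (SUP p. ereal (inner v p - H t x p))"

definition epiConj :: "(real \<Rightarrow> 'a::euclidean_space \<Rightarrow> 'a \<Rightarrow> real) \<Rightarrow> real \<Rightarrow> 'a \<Rightarrow> ('a \<times> real) set" where
  "epiConj H t x = {(v, \<eta>). conjH H t x v \<le> ereal \<eta>}"

definition PhiS :: "(real \<Rightarrow> 'a::euclidean_space \<Rightarrow> 'a \<Rightarrow> real) \<Rightarrow> real \<Rightarrow> 'a \<Rightarrow> 'a \<times> real \<Rightarrow> ('a \<times> real) set" where
  "PhiS H t x a = epiConj H t x \<inter> cball a (2 * infdist a (epiConj H t x))"

definition supp_fun :: "'b::euclidean_space set \<Rightarrow> 'b \<Rightarrow> real" where
  "supp_fun K p = Sup ((\<lambda>y. inner p y) ` K)"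

text \<open>Rotation-invariant probability measure on the unit sphere, realised as the
  push-forward of the normalised Lebesgue measure on the unit ball under radial projection.\<close>
definition sphere_measure :: "'b::euclidean_space measure" where
  "sphere_measure = distr (uniform_measure lborel (ball 0 1)) borel (\<lambda>p. sgn p)"

definition steiner_point :: "'b::euclidean_space set \<Rightarrow> 'b" where
  "steiner_point K = real DIM('b) *\<^sub>R (\<integral>p. supp_fun K p *\<^sub>R p \<partial>sphere_measure)"

definition steiner_e :: "(real \<Rightarrow> 'a::euclidean_space \<Rightarrow> 'a \<Rightarrow> real) \<Rightarrow> real \<Rightarrow> 'a \<Rightarrow> 'a \<times> real \<Rightarrow> 'a \<times> real" where
  "steiner_e H t x a = steiner_point (PhiS H t x a)"

definition steiner_f :: "(real \<Rightarrow> 'a::euclidean_space \<Rightarrow> 'a \<Rightarrow> real) \<Rightarrow> real \<Rightarrow> 'a \<Rightarrow> 'a \<times> real \<Rightarrow> 'a" where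
  "steiner_f H t x a = fst (steiner_e H t x a)"

definition steiner_l :: "(real \<Rightarrow> 'a::euclidean_space \<Rightarrow> 'a \<Rightarrow> real) \<Rightarrow> real \<Rightarrow> 'a \<Rightarrow> 'a \<times> real \<Rightarrow> real" where
  "steiner_l H t x a = snd (steiner_e H t x a)"

definition hyp_H :: "real \<Rightarrow> (real \<Rightarrow> 'a::euclidean_space \<Rightarrow> 'a \<Rightarrow> real) \<Rightarrow> bool" where
  "hyp_H T H \<longleftrightarrow>
     (\<forall>x p. (\<lambda>t. H t x p) \<in> borel_measurable (lebesgue_on {0..T})) \<and>
     (\<forall>t\<in>{0..T}. continuous_on UNIV (\<lambda>(x, p). H t x p)) \<and>
     (\<forall>t\<in>{0..T}. \<forall>x. convex_on UNIV (H t x)) \<and>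
     (\<exists>c. c \<in> borel_measurable (lebesgue_on {0..T}) \<and> (\<forall>t\<in>{0..T}. c t \<ge> 0) \<and>
        (\<forall>t\<in>{0..T}. \<forall>x p q. \<bar>H t x p - H t x q\<bar> \<le> c t * (1 + norm x) * norm (p - q))) \<and>
     (\<forall>R>0. \<exists>k. k \<in> borel_measurable (lebesgue_on {0..T}) \<and> (\<forall>t\<in>{0..T}. k t \<ge> 0) \<and>
        (\<forall>t\<in>{0..T}. \<forall>x\<in>cball 0 R. \<forall>y\<in>cball 0 R. \<forall>p.
           \<bar>H t x p - H t y p\<bar> \<le> k t * (1 + norm p) * norm (x - y)))"

end

theory Submission
  imports Defs "HOL-Probability.Probability_Measure"
begin

(* The support function of a compact set moves by at most delta |p| when the set moves by delta
   in Hausdorff distance, so the Steiner point in R^m is m-Lipschitz for the Hausdorff distance.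
   By compactness of K it suffices to compare e_i and e along subsequences i_k and convergent
   arguments (t_k, x_k, a_k) -> (t, x, a); there H_(i_k)(t_k, x_k, .) -> H(t, x, .) uniformly on
   balls, and one shows that the sets Phi converge in the Hausdorff sense.  For convex continuous
   g_k -> g locally uniformly, every point of E = epi g* is a limit of points of E_k = epi g_k*
   (an affine minorant of g is moved to one of g_k by separating g_k from a disc below its graph),
   and limit points of E_k lie in E.  Hence d(a_k, E_k) -> d(a, E), and the intersection Phi_k of
   E_k with the ball B(a_k, 2 d(a_k, E_k)) converges to Phi; the points of Phi at distance exactly
   2 d(a, E) from a are reached through points of E strictly inside the ball, which exist by
   convexity of E. *)

section \<open>Hausdorff continuity of the Steiner point\<close>

definition hausdorff_close :: "'b::metric_space set \<Rightarrow> 'b set \<Rightarrow> real \<Rightarrow> bool" where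
  "hausdorff_close A B \<delta> \<longleftrightarrow> (\<forall>y\<in>A. \<exists>z\<in>B. dist y z \<le> \<delta>) \<and> (\<forall>z\<in>B. \<exists>y\<in>A. dist y z \<le> \<delta>)"

lemma bdd_above_inner_image: "bounded A \<Longrightarrow> bdd_above ((\<lambda>y. inner u y) ` A)"
  by (intro bounded_imp_bdd_above bounded_linear_image) (auto intro: bounded_linear_inner_right)

lemma supp_fun_le_close:
  fixes A B :: "'b::euclidean_space set"
  assumes "A \<noteq> {}" "compact B" "\<forall>y\<in>A. \<exists>z\<in>B. dist y z \<le> \<delta>"
  shows "supp_fun A u \<le> supp_fun B u + \<delta> * norm u"
  unfolding supp_fun_def
proof (rule cSUP_least[OF \<open>A \<noteq> {}\<close>])
  fix y assume "y \<in> A"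
  then obtain z where z: "z \<in> B" "dist y z \<le> \<delta>" using assms(3) by blast
  have "inner u z \<le> Sup ((\<lambda>y. inner u y) ` B)"
    using bdd_above_inner_image[OF compact_imp_bounded[OF \<open>compact B\<close>]] z(1) by (rule cSUP_upper2) simp
  moreover have "inner u (y - z) \<le> \<delta> * norm u"
    using z(2) Cauchy_Schwarz_ineq2[of u "y - z"] norm_ge_zero[of u]
    by (smt (verit) dist_norm mult.commute mult_left_mono)
  ultimately show "inner u y \<le> Sup ((\<lambda>y. inner u y) ` B) + \<delta> * norm u"
    by (simp add: inner_diff_right)
qed

lemma abs_supp_fun_diff_le:
  fixes A B :: "'b::euclidean_space set"
  assumes "compact A" "compact B" "A \<noteq> {}" "B \<noteq> {}" "hausdorff_close A B \<delta>"
  shows "\<bar>supp_fun A u - supp_fun B u\<bar> \<le> \<delta> * norm u"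
  using supp_fun_le_close[of A B \<delta> u] supp_fun_le_close[of B A \<delta> u] assms
  by (auto simp: hausdorff_close_def dist_commute)

lemma supp_fun_lipschitz:
  fixes A :: "'b::euclidean_space set"
  assumes "A \<noteq> {}" "\<forall>y\<in>A. norm y \<le> M"
  shows "M-lipschitz_on UNIV (supp_fun A)"
proof (rule lipschitz_onI)
  have le: "supp_fun A u \<le> supp_fun A v + M * norm (u - v)" for u v
    unfolding supp_fun_def
  proof (rule cSUP_least[OF \<open>A \<noteq> {}\<close>])
    fix y assume "y \<in> A"
    have "bounded A" using assms(2) by (auto simp: bounded_iff)
    then have "inner v y \<le> Sup ((\<lambda>y. inner v y) ` A)"
      using bdd_above_inner_image[of A v] \<open>y \<in> A\<close> by (intro cSUP_upper2) auto
    moreover have "inner (u - v) y \<le> M * norm (u - v)"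
      using \<open>y \<in> A\<close> assms(2) Cauchy_Schwarz_ineq2[of "u - v" y] norm_ge_zero[of "u - v"]
      by (smt (verit) mult.commute mult_left_mono)
    ultimately show "inner u y \<le> Sup ((\<lambda>y. inner v y) ` A) + M * norm (u - v)"
      by (simp add: inner_diff_left)
  qed
  fix u v :: 'b
  show "dist (supp_fun A u) (supp_fun A v) \<le> M * dist u v"
    using le[of u v] le[of v u] by (simp add: dist_real_def dist_norm norm_minus_commute)
  show "0 \<le> M" using assms norm_ge_zero order_trans by blast
qed

lemma prob_space_sphere_measure: "prob_space (sphere_measure :: 'b::euclidean_space measure)"
proof -
  have "prob_space (uniform_measure lborel (ball (0::'b) 1))"
    using unit_ball_vol_pos[of "real DIM('b)"]
    by (intro prob_space_uniform_measure) (auto simp: emeasure_ball simp del: unit_ball_vol_pos)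
  then show ?thesis
    unfolding sphere_measure_def by (rule prob_space.prob_space_distr) simp
qed

lemma AE_sphere_measure_norm_le_1: "AE p in (sphere_measure :: 'b::euclidean_space measure). norm p \<le> 1"
  unfolding sphere_measure_def by (subst AE_distr_iff) (auto simp: norm_sgn)

lemma integrable_steiner_integrand:
  fixes A :: "'b::euclidean_space set"
  assumes "compact A" "A \<noteq> {}"
  shows "integrable sphere_measure (\<lambda>p. supp_fun A p *\<^sub>R p)"
proof -
  interpret prob_space "sphere_measure :: 'b measure" by (rule prob_space_sphere_measure)
  obtain M where M: "\<forall>y\<in>A. norm y \<le> M"
    using compact_imp_bounded[OF \<open>compact A\<close>] bounded_iff by blast
  have lip: "M-lipschitz_on UNIV (supp_fun A)" by (rule supp_fun_lipschitz[OF \<open>A \<noteq> {}\<close> M])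
  have "supp_fun A 0 = 0" using \<open>A \<noteq> {}\<close> by (simp add: supp_fun_def)
  then have "\<bar>supp_fun A p\<bar> \<le> M * norm p" for p
    using lipschitz_onD[OF lip, of p 0] by (simp add: dist_real_def)
  then have "norm (supp_fun A p *\<^sub>R p) \<le> M" if "norm p \<le> 1" for p
    using that lipschitz_on_nonneg[OF lip] 
    by (smt (verit) mult_left_le mult_mono norm_ge_zero norm_scaleR)
  moreover have "(\<lambda>p. supp_fun A p *\<^sub>R p) \<in> borel_measurable sphere_measure"
    unfolding sphere_measure_def measurable_distr_eq1
    by (intro borel_measurable_continuous_onI continuous_intros
        lipschitz_on_continuous_on[OF lip])
  ultimately show ?thesis
    using AE_sphere_measure_norm_le_1 by (intro integrable_const_bound[where B=M]) auto
qed

lemma norm_steiner_point_diff_le: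
  fixes A B :: "'b::euclidean_space set"
  assumes "compact A" "compact B" "A \<noteq> {}" "B \<noteq> {}" "hausdorff_close A B \<delta>"
  shows "norm (steiner_point A - steiner_point B) \<le> real DIM('b) * \<delta>"
proof -
  interpret prob_space "sphere_measure :: 'b measure" by (rule prob_space_sphere_measure)
  have "0 \<le> \<delta>"
    using assms(3,5) unfolding hausdorff_close_def by (meson ex_in_conv order_trans zero_le_dist)
  have "norm (\<integral>p. supp_fun A p *\<^sub>R p - supp_fun B p *\<^sub>R p \<partial>sphere_measure)
      \<le> (\<integral>p. norm (supp_fun A p *\<^sub>R p - supp_fun B p *\<^sub>R p) \<partial>sphere_measure)"
    by (rule integral_norm_bound)
  also have "\<dots> \<le> (\<integral>p. \<delta> \<partial>(sphere_measure :: 'b measure))"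
  proof (rule Bochner_Integration.integral_mono_AE)
    show "AE p in sphere_measure. norm (supp_fun A p *\<^sub>R p - supp_fun B p *\<^sub>R p) \<le> \<delta>"
      using AE_sphere_measure_norm_le_1
    proof eventually_elim
      case (elim p)
      have "norm (supp_fun A p *\<^sub>R p - supp_fun B p *\<^sub>R p) = \<bar>supp_fun A p - supp_fun B p\<bar> * norm p"
        by (simp flip: scaleR_diff_left)
      also have "\<dots> \<le> \<delta> * norm p * norm p"
        by (intro mult_right_mono abs_supp_fun_diff_le assms) simp
      also have "\<dots> \<le> \<delta>"
        using elim \<open>0 \<le> \<delta>\<close> by (simp add: mult_le_one mult.assoc mult_left_le)
      finally show ?case .
    qed
  qed (auto intro!: integrable_steiner_integrand assms)
  finally show ?thesis
    using assms unfolding steiner_point_def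
    by (simp add: integral_diff integrable_steiner_integrand prob_space flip: scaleR_diff_right)
qed

lemma eventually_hausdorff_close:
  fixes S :: "nat \<Rightarrow> 'b::metric_space set"
  assumes "compact S0"
    and approx: "\<And>z e. z \<in> S0 \<Longrightarrow> 0 < e \<Longrightarrow> eventually (\<lambda>k. \<exists>y\<in>S k. dist y z < e) sequentially"
    and cluster: "\<And>(r :: nat \<Rightarrow> nat) y. strict_mono r \<Longrightarrow> (\<And>k. y k \<in> S (r k)) \<Longrightarrow>
      \<exists>q y0. strict_mono q \<and> (y \<circ> q) \<longlonglongrightarrow> y0 \<and> y0 \<in> S0"
    and "0 < e"
  shows "eventually (\<lambda>k. hausdorff_close (S k) S0 e) sequentially"
proof -
  have "eventually (\<lambda>k. \<forall>y\<in>S k. \<exists>z\<in>S0. dist y z \<le> e) sequentially"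
  proof (rule ccontr)
    assume contra: "\<not> ?thesis"
    obtain r :: "nat \<Rightarrow> nat" where r: "strict_mono r" "\<forall>k. \<not> (\<forall>y\<in>S (r k). \<exists>z\<in>S0. dist y z \<le> e)"
      using not_eventually_sequentiallyD[OF contra] by blast
    then obtain y where y: "\<And>k. y k \<in> S (r k)" "\<And>k z. z \<in> S0 \<Longrightarrow> e < dist (y k) z"
      by (metis not_le)
    obtain q y0 where q: "(y \<circ> q) \<longlonglongrightarrow> y0" "y0 \<in> S0"
      using cluster[OF r(1) y(1)] by blast
    obtain k where "dist (y (q k)) y0 < e"
      using eventually_happens'[OF _ tendstoD[OF q(1) \<open>0 < e\<close>]] by auto
    with y(2)[OF q(2), of "q k"] show False by simp
  qed
  moreover have "eventually (\<lambda>k. \<forall>z\<in>S0. \<exists>y\<in>S k. dist y z \<le> e) sequentially"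
  proof -
    obtain N where N: "finite N" "N \<subseteq> S0" "S0 \<subseteq> (\<Union>x\<in>N. ball x (e/2))"
      using seq_compact_imp_totally_bounded[OF compact_imp_seq_compact[OF \<open>compact S0\<close>]] \<open>0 < e\<close>
      by (meson half_gt_zero)
    have "eventually (\<lambda>k. \<forall>x\<in>N. \<exists>y\<in>S k. dist y x < e/2) sequentially"
      using N(1,2) \<open>0 < e\<close> by (intro eventually_ball_finite ballI approx) auto
    then show ?thesis
    proof eventually_elim
      case (elim k)
      show ?case
      proof
        fix z assume "z \<in> S0"
        then obtain x where "x \<in> N" "dist x z < e/2" using N(3) by auto
        moreover obtain y where "y \<in> S k" "dist y x < e/2" using elim \<open>x \<in> N\<close> by blast
        ultimately show "\<exists>y\<in>S k. dist y z \<le> e"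
          using dist_triangle[of y z x] by (intro bexI[of _ y]) auto
      qed
    qed
  qed
  ultimately show ?thesis
    by eventually_elim (simp add: hausdorff_close_def)
qed

lemma steiner_point_tendsto:
  fixes S :: "nat \<Rightarrow> 'b::euclidean_space set"
  assumes "\<And>k. compact (S k)" "\<And>k. S k \<noteq> {}" "compact S0" "S0 \<noteq> {}"
    and "\<And>e. 0 < e \<Longrightarrow> eventually (\<lambda>k. hausdorff_close (S k) S0 e) sequentially"
  shows "(\<lambda>k. steiner_point (S k)) \<longlonglongrightarrow> steiner_point S0"
proof (rule tendstoI)
  fix e :: real assume "0 < e"
  then have e': "0 < e / (2 * real DIM('b))" by simp
  show "eventually (\<lambda>k. dist (steiner_point (S k)) (steiner_point S0) < e) sequentially"
    using assms(5)[OF e']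
  proof eventually_elim
    case (elim k)
    then have "dist (steiner_point (S k)) (steiner_point S0) \<le> real DIM('b) * (e / (2 * real DIM('b)))"
      unfolding dist_norm by (intro norm_steiner_point_diff_le assms)
    then show ?case
      using \<open>0 < e\<close> by simp
  qed
qed

section \<open>The epigraph of the conjugate\<close>

definition epi_conj :: "('a::euclidean_space \<Rightarrow> real) \<Rightarrow> ('a \<times> real) set" where
  "epi_conj g = {(v, \<eta>). \<forall>p. inner v p - g p \<le> \<eta>}"

definition Phi :: "('a::euclidean_space \<Rightarrow> real) \<Rightarrow> 'a \<times> real \<Rightarrow> ('a \<times> real) set" where
  "Phi g a = epi_conj g \<inter> cball a (2 * infdist a (epi_conj g))"

lemma epiConj_eq_epi_conj: "epiConj H t x = epi_conj (H t x)"
  unfolding epiConj_def epi_conj_def conjH_def by (auto simp: SUP_le_iff)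

lemma steiner_e_eq_steiner_point_Phi: "steiner_e H t x a = steiner_point (Phi (H t x) a)"
  unfolding steiner_e_def PhiS_def Phi_def epiConj_eq_epi_conj ..

lemma epi_conj_eq_Inter_halfspaces: "epi_conj g = (\<Inter>p. {w. inner (p, -1) w \<le> g p})"
  unfolding epi_conj_def by (auto simp: inner_commute) (smt (verit))+

lemma closed_epi_conj: "closed (epi_conj g)"
  unfolding epi_conj_eq_Inter_halfspaces by (intro closed_INT ballI closed_halfspace_le)

lemma convex_epi_conj: "convex (epi_conj g)"
  unfolding epi_conj_eq_Inter_halfspaces by (intro convex_INT ballI convex_halfspace_le)

lemma convex_on_add_affine:
  fixes g :: "'a::real_inner \<Rightarrow> real"
  assumes "convex_on S g"
  shows "convex_on S (\<lambda>p. g p + inner c p + d)"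
proof (rule convex_onI)
  fix t :: real and x y assume "0 < t" "t < 1" "x \<in> S" "y \<in> S"
  then have "g ((1 - t) *\<^sub>R x + t *\<^sub>R y) \<le> (1 - t) * g x + t * g y"
    using convex_onD[OF assms] by simp
  then show "g ((1 - t) *\<^sub>R x + t *\<^sub>R y) + inner c ((1 - t) *\<^sub>R x + t *\<^sub>R y) + d
      \<le> (1 - t) * (g x + inner c x + d) + t * (g y + inner c y + d)"
    by (simp add: algebra_simps)
qed (rule convex_on_imp_convex[OF assms])

lemma affine_minorant_above_compact:
  fixes \<phi> :: "'a::euclidean_space \<Rightarrow> real"
  assumes "convex_on UNIV \<phi>" "continuous_on UNIV \<phi>"
    and "compact D" "convex D" "D \<noteq> {}" and below: "\<forall>(p, y)\<in>D. y < \<phi> p"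
  shows "\<exists>s b. (\<forall>p. b + inner s p \<le> \<phi> p) \<and> (\<forall>(p, y)\<in>D. y < b + inner s p)"
proof -
  have "convex (epigraph UNIV \<phi>)" using assms(1) by (rule convex_epigraphI)
  moreover have "closed (epigraph UNIV \<phi>)"
  proof -
    have "closed {z. \<phi> (fst z) \<le> snd z}"
      by (intro closed_Collect_le continuous_intros continuous_on_compose2[OF assms(2)]) auto
    then show ?thesis by (simp add: epigraph_def)
  qed
  moreover have "D \<inter> epigraph UNIV \<phi> = {}" using below by (auto simp: epigraph_def)
  ultimately obtain a b where ab: "\<forall>x\<in>D. inner a x < b" "\<forall>x\<in>epigraph UNIV \<phi>. b < inner a x"
    using separating_hyperplane_compact_closed[OF assms(4,3,5)] by blast
  obtain s' \<alpha> where "a = (s', \<alpha>)" by fastforce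
  with ab have D: "\<And>p y. (p, y) \<in> D \<Longrightarrow> inner s' p + \<alpha> * y < b"
    and epi: "\<And>p. b < inner s' p + \<alpha> * \<phi> p"
    by (auto simp: epigraph_def)
  obtain p0 y0 where p0: "(p0, y0) \<in> D" using assms(5) by auto
  have "\<alpha> * y0 < \<alpha> * \<phi> p0" "y0 < \<phi> p0" using D[OF p0] epi[of p0] below p0 by auto
  then have "0 < \<alpha>" by (smt (verit) mult_le_cancel_left)
  \<comment> \<open>the separating hyperplane is not vertical, so it is the graph of an affine function\<close>
  show ?thesis
  proof (intro exI conjI allI ballI)
    show "b / \<alpha> + inner (- (1/\<alpha>) *\<^sub>R s') p \<le> \<phi> p" for p
      using epi[of p] \<open>0 < \<alpha>\<close> by (simp add: field_simps)
    show "case z of (p, y) \<Rightarrow> y < b / \<alpha> + inner (- (1/\<alpha>) *\<^sub>R s') p" if "z \<in> D" for z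
      using that D \<open>0 < \<alpha>\<close> by (auto simp: field_simps)
  qed
qed

lemma epi_conj_nonempty:
  fixes g :: "'a::euclidean_space \<Rightarrow> real"
  assumes "convex_on UNIV g" "continuous_on UNIV g"
  shows "epi_conj g \<noteq> {}"
proof -
  obtain s b where "\<forall>p. b + inner s p \<le> g p"
    using affine_minorant_above_compact[OF assms, of "{(0, g 0 - 1)}"] by auto
  then have "(s, -b) \<in> epi_conj g" by (auto simp: epi_conj_def algebra_simps)
  then show ?thesis by blast
qed

lemma compact_Phi: "compact (Phi g a)"
  unfolding Phi_def by (intro closed_Int_compact closed_epi_conj compact_cball)

lemma nearest_point_in_Phi:
  assumes "epi_conj g \<noteq> {}"
  obtains c where "c \<in> Phi g a" "infdist a (epi_conj g) = dist a c"
proof -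
  obtain c where "c \<in> epi_conj g" "infdist a (epi_conj g) = dist a c"
    using infdist_attains_inf[OF closed_epi_conj assms] by blast
  with infdist_nonneg[of a] show ?thesis by (intro that) (auto simp: Phi_def)
qed

lemma Phi_nonempty: "epi_conj g \<noteq> {} \<Longrightarrow> Phi g a \<noteq> {}"
  by (metis empty_iff nearest_point_in_Phi)

section \<open>Stability under locally uniform convergence\<close>

lemma epi_conj_perturb:
  fixes G g :: "'a::euclidean_space \<Rightarrow> real"
  assumes "convex_on UNIV G" "continuous_on UNIV G" "(v, \<eta>) \<in> epi_conj g" "0 < \<epsilon>"
    and R: "g 0 + \<eta> + 3 * \<epsilon> \<le> R * \<epsilon>" and close: "\<forall>p\<in>cball 0 R. \<bar>G p - g p\<bar> \<le> \<epsilon>"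
  shows "\<exists>s. norm s < \<epsilon> \<and> (v + s, \<eta> + 2 * \<epsilon>) \<in> epi_conj G"
proof -
  \<comment> \<open>(v', \<eta>') \<in> epi_conj G says that p \<mapsto> v' \<bullet> p - \<eta>' is an affine minorant of G. Such a
    minorant is found by separating \<phi> = G - v \<bullet> _ + \<eta>, which exceeds -2\<epsilon> on cball 0 R, from the
    disc cball 0 R \<times> {-2\<epsilon>}; R is so large that the slope s of the separating hyperplane is small.\<close>
  have g_le: "inner v p - g p \<le> \<eta>" for p using assms(3) by (auto simp: epi_conj_def)
  have "0 < R * \<epsilon>" using g_le[of 0] R \<open>0 < \<epsilon>\<close> by simp
  with \<open>0 < \<epsilon>\<close> have "0 < R" by (simp add: zero_less_mult_iff)
  define \<phi> where "\<phi> p = G p + inner (- v) p + \<eta>" for p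
  let ?D = "cball (0::'a) R \<times> {- 2 * \<epsilon>}"
  have "convex_on UNIV \<phi>" unfolding \<phi>_def by (rule convex_on_add_affine[OF assms(1)])
  moreover have "continuous_on UNIV \<phi>" unfolding \<phi>_def by (intro continuous_intros assms(2))
  moreover have "\<forall>(p, y)\<in>?D. y < \<phi> p"
  proof clarify
    fix p :: 'a assume "p \<in> cball 0 R"
    then have "\<bar>G p - g p\<bar> \<le> \<epsilon>" using close by blast
    then show "- 2 * \<epsilon> < \<phi> p" using g_le[of p] \<open>0 < \<epsilon>\<close> by (simp add: \<phi>_def)
  qed
  ultimately have "\<exists>s b. (\<forall>p. b + inner s p \<le> \<phi> p) \<and> (\<forall>(p, y)\<in>?D. y < b + inner s p)"
    using \<open>0 < R\<close> by (intro affine_minorant_above_compact) (auto simp: compact_Times convex_Times)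
  then obtain s b where minorant: "\<And>p. b + inner s p \<le> \<phi> p"
    and above: "\<And>p. p \<in> cball 0 R \<Longrightarrow> - 2 * \<epsilon> < b + inner s p"
    by fastforce
  have "\<bar>G 0 - g 0\<bar> \<le> \<epsilon>" using close \<open>0 < R\<close> by simp
  then have b: "b \<le> g 0 + \<eta> + \<epsilon>" using minorant[of 0] by (simp add: \<phi>_def)
  have "norm s < \<epsilon>"
  proof (cases "s = 0")
    case False
    \<comment> \<open>test the minorant at the point of the sphere of radius R opposite to s\<close>
    have "- 2 * \<epsilon> < b + inner s (- (R / norm s) *\<^sub>R s)"
      using above[of "- (R / norm s) *\<^sub>R s"] \<open>0 < R\<close> by simp
    also have "inner s (- (R / norm s) *\<^sub>R s) = - R * norm s"
      using False by (simp add: power2_norm_eq_inner[symmetric] power2_eq_square)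
    finally have "R * norm s < R * \<epsilon>" using b R by linarith
    then show ?thesis using \<open>0 < R\<close> by simp
  qed (use \<open>0 < \<epsilon>\<close> in simp)
  moreover have "(v + s, \<eta> + 2 * \<epsilon>) \<in> epi_conj G"
  proof -
    have "- 2 * \<epsilon> < b" using above[of 0] \<open>0 < R\<close> by simp
    then have "inner (v + s) p - G p \<le> \<eta> + 2 * \<epsilon>" for p
      using minorant[of p] by (simp add: \<phi>_def inner_add_left)
    then show ?thesis by (simp add: epi_conj_def)
  qed
  ultimately show ?thesis by blast
qed

lemma convex_cball_approx_by_ball:
  fixes E :: "'b::real_normed_vector set"
  assumes "convex E" "z \<in> E" "c \<in> E" "dist a c < r" "dist a z \<le> r" "0 < e"
  shows "\<exists>y\<in>E. dist a y < r \<and> dist y z < e"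
proof -
  define t where "t = e / (e + dist z c)"
  have "0 < e + dist z c" using \<open>0 < e\<close> by (simp add: add_pos_nonneg)
  then have t: "0 < t" "t \<le> 1" using \<open>0 < e\<close> by (auto simp: t_def)
  define y where "y = (1 - t) *\<^sub>R z + t *\<^sub>R c"
  have "y \<in> E" unfolding y_def using t by (intro convexD[OF assms(1-3)]) auto
  moreover have "dist a y < r"
  proof -
    have "a - y = (1 - t) *\<^sub>R (a - z) + t *\<^sub>R (a - c)" by (simp add: y_def algebra_simps)
    then have "dist a y \<le> (1 - t) * dist a z + t * dist a c"
      using norm_triangle_ineq[of "(1 - t) *\<^sub>R (a - z)" "t *\<^sub>R (a - c)"] t by (simp add: dist_norm)
    also have "\<dots> < (1 - t) * r + t * r"
      using t assms(4,5) by (intro add_le_less_mono mult_left_mono mult_strict_left_mono) auto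
    finally show ?thesis by (simp add: algebra_simps)
  qed
  moreover have "dist y z < e"
  proof -
    have "y - z = t *\<^sub>R (c - z)" by (simp add: y_def algebra_simps)
    then have "dist y z = t * dist z c" using t by (simp add: dist_norm norm_minus_commute)
    also have "\<dots> < e" using \<open>0 < e\<close> by (simp add: t_def field_simps add_pos_nonneg)
    finally show ?thesis .
  qed
  ultimately show ?thesis by blast
qed

context
  fixes G :: "nat \<Rightarrow> 'a::euclidean_space \<Rightarrow> real" and g :: "'a \<Rightarrow> real"
  assumes convex_G: "\<And>k. convex_on UNIV (G k)" and cont_G: "\<And>k. continuous_on UNIV (G k)"
    and G_lim: "\<And>R. uniform_limit (cball 0 R) G g sequentially"
begin

lemma epi_conj_approx:
  assumes "w \<in> epi_conj g" "0 < e"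
  shows "eventually (\<lambda>k. \<exists>w'\<in>epi_conj (G k). dist w' w < e) sequentially"
proof -
  obtain v \<eta> where w: "w = (v, \<eta>)" by fastforce
  define \<epsilon> where "\<epsilon> = e / 4"
  define R where "R = (g 0 + \<eta> + 3 * \<epsilon>) / \<epsilon>"
  have "0 < \<epsilon>" "g 0 + \<eta> + 3 * \<epsilon> \<le> R * \<epsilon>" using \<open>0 < e\<close> by (simp_all add: \<epsilon>_def R_def)
  show ?thesis
    using uniform_limitD[OF G_lim[of R] \<open>0 < \<epsilon>\<close>]
  proof eventually_elim
    case (elim k)
    then obtain s where s: "norm s < \<epsilon>" "(v + s, \<eta> + 2 * \<epsilon>) \<in> epi_conj (G k)"
      using epi_conj_perturb[OF convex_G cont_G assms(1)[unfolded w] \<open>0 < \<epsilon>\<close> \<open>_ \<le> R * \<epsilon>\<close>]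
      by (force simp: dist_real_def)
    have "dist (v + s, \<eta> + 2 * \<epsilon>) w \<le> norm s + 2 * \<epsilon>"
      using norm_Pair_le[of s "2 * \<epsilon>"] \<open>0 < \<epsilon>\<close> by (simp add: w dist_norm)
    with s \<open>0 < e\<close> show ?case by (intro bexI[OF _ s(2)]) (simp add: \<epsilon>_def)
  qed
qed

lemma epi_conj_limit:
  fixes r :: "nat \<Rightarrow> nat"
  assumes "strict_mono r" "\<And>k. w k \<in> epi_conj (G (r k))" "w \<longlonglongrightarrow> (v0, \<eta>0)"
  shows "(v0, \<eta>0) \<in> epi_conj g"
proof -
  have "inner v0 p - g p \<le> \<eta>0" for p
  proof -
    have "(\<lambda>k. G k p) \<longlonglongrightarrow> g p"
      using G_lim[of "norm p"] by (rule tendsto_uniform_limitI) simp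
    then have "(\<lambda>k. inner (fst (w k)) p - G (r k) p) \<longlonglongrightarrow> inner v0 p - g p"
      using tendsto_fst[OF assms(3)] LIMSEQ_subseq_LIMSEQ[OF _ assms(1)]
      by (auto simp: o_def intro!: tendsto_diff tendsto_inner)
    moreover have "inner (fst (w k)) p - G (r k) p \<le> snd (w k)" for k
      using assms(2)[of k] by (auto simp: epi_conj_def split: prod.splits)
    ultimately show ?thesis
      using tendsto_snd[OF assms(3)] by (auto intro: tendsto_le[OF trivial_limit_sequentially])
  qed
  then show ?thesis by (simp add: epi_conj_def)
qed

lemma epi_conj_cluster:
  fixes r :: "nat \<Rightarrow> nat"
  assumes "strict_mono r" "\<And>k. w k \<in> epi_conj (G (r k))" "bounded (range w)"
  shows "\<exists>q w0. strict_mono q \<and> (w \<circ> q) \<longlonglongrightarrow> w0 \<and> w0 \<in> epi_conj g"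
proof -
  obtain q w0 where q: "strict_mono q" "(w \<circ> q) \<longlonglongrightarrow> w0"
    using bounded_imp_convergent_subsequence[OF assms(3)] by blast
  have "w0 \<in> epi_conj g"
    using q assms(2) epi_conj_limit[of "r \<circ> q" "w \<circ> q" "fst w0" "snd w0"] strict_mono_o[OF assms(1)]
    by auto
  with q show ?thesis by blast
qed

context
  fixes A :: "nat \<Rightarrow> 'a \<times> real" and a :: "'a \<times> real"
  assumes convex_g: "convex_on UNIV g" and cont_g: "continuous_on UNIV g" and A_lim: "A \<longlonglongrightarrow> a"
begin

lemma eventually_infdist_epi_conj_less:
  assumes "0 < e"
  shows "eventually (\<lambda>k. infdist (A k) (epi_conj (G k)) < infdist a (epi_conj g) + e) sequentially"
proof -
  obtain c where c: "c \<in> epi_conj g" "infdist a (epi_conj g) = dist a c"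
    using infdist_attains_inf[OF closed_epi_conj epi_conj_nonempty[OF convex_g cont_g]] by blast
  have "eventually (\<lambda>k. dist (A k) a < e/2) sequentially"
    using tendstoD[OF A_lim, of "e/2"] \<open>0 < e\<close> by simp
  moreover have "eventually (\<lambda>k. \<exists>w\<in>epi_conj (G k). dist w c < e/2) sequentially"
    using epi_conj_approx[OF c(1), of "e/2"] \<open>0 < e\<close> by simp
  ultimately show ?thesis
  proof eventually_elim
    case (elim k)
    then obtain w where "w \<in> epi_conj (G k)" "dist w c < e/2" by blast
    then have "infdist (A k) (epi_conj (G k)) \<le> dist (A k) a + dist a c + dist c w"
      using infdist_le[of w "epi_conj (G k)" "A k"] dist_triangle[of "A k" w c] dist_triangle[of "A k" c a]
      by linarith
    with elim \<open>dist w c < e/2\<close> c(2) show ?case by (simp add: dist_commute)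
  qed
qed

lemma eventually_infdist_epi_conj_greater:
  assumes "0 < e"
  shows "eventually (\<lambda>k. infdist a (epi_conj g) - e < infdist (A k) (epi_conj (G k))) sequentially"
proof (rule ccontr)
  let ?d = "\<lambda>k. infdist (A k) (epi_conj (G k))"
  let ?D = "infdist a (epi_conj g)"
  assume contra: "\<not> ?thesis"
  obtain r :: "nat \<Rightarrow> nat" where r: "strict_mono r" "\<And>k. ?d (r k) \<le> ?D - e"
    using not_eventually_sequentiallyD[OF contra] by (auto simp: not_less)
  have "\<exists>c. c \<in> epi_conj (G (r k)) \<and> ?d (r k) = dist (A (r k)) c" for k
    using infdist_attains_inf[OF closed_epi_conj epi_conj_nonempty[OF convex_G cont_G]] by metis
  then obtain c where c: "\<And>k. c k \<in> epi_conj (G (r k))" "\<And>k. ?d (r k) = dist (A (r k)) (c k)"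
    by metis
  obtain B where B: "\<And>k. norm (A k) \<le> B"
    using convergent_imp_bounded[OF A_lim] by (auto simp: bounded_iff)
  have "norm (c k) \<le> B + ?D" for k
    using norm_triangle_sub[of "c k" "A (r k)"] B[of "r k"] c(2)[of k] r(2)[of k] \<open>0 < e\<close>
    by (simp add: dist_norm norm_minus_commute)
  then have "bounded (range c)" by (auto simp: bounded_iff)
  then obtain q c0 where q: "strict_mono q" "(c \<circ> q) \<longlonglongrightarrow> c0" "c0 \<in> epi_conj g"
    using epi_conj_cluster[OF r(1) c(1)] by blast
  have "(\<lambda>k. dist (A (r (q k))) (c (q k))) \<longlonglongrightarrow> dist a c0"
    using LIMSEQ_subseq_LIMSEQ[OF A_lim strict_mono_o[OF r(1) q(1)]] q(2)
    by (auto simp: o_def intro!: tendsto_dist)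
  moreover have "dist (A (r k)) (c k) \<le> ?D - e" for k using r(2)[of k] c(2)[of k] by simp
  ultimately have "dist a c0 \<le> ?D - e" by (auto intro: tendsto_upperbound)
  moreover have "?D \<le> dist a c0" by (rule infdist_le[OF q(3)])
  ultimately show False using \<open>0 < e\<close> by simp
qed

lemma infdist_epi_conj_tendsto: "(\<lambda>k. infdist (A k) (epi_conj (G k))) \<longlonglongrightarrow> infdist a (epi_conj g)"
proof (rule tendstoI)
  fix e :: real assume "0 < e"
  show "eventually (\<lambda>k. dist (infdist (A k) (epi_conj (G k))) (infdist a (epi_conj g)) < e) sequentially"
    using eventually_infdist_epi_conj_less[OF \<open>0 < e\<close>] eventually_infdist_epi_conj_greater[OF \<open>0 < e\<close>]
    by eventually_elim (simp add: dist_real_def abs_less_iff)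
qed

lemma Phi_approx_strict:
  assumes "y \<in> epi_conj g" "dist a y < 2 * infdist a (epi_conj g)" "0 < e"
  shows "eventually (\<lambda>k. \<exists>w\<in>Phi (G k) (A k). dist w y < e) sequentially"
proof -
  define m where "m = (2 * infdist a (epi_conj g) - dist a y) / 4"
  have "0 < m" "0 < min e m" "4 * m = 2 * infdist a (epi_conj g) - dist a y"
    using assms(2,3) by (simp_all add: m_def)
  have "eventually (\<lambda>k. \<exists>w\<in>epi_conj (G k). dist w y < min e m) sequentially"
    by (rule epi_conj_approx[OF assms(1) \<open>0 < min e m\<close>])
  moreover have "eventually (\<lambda>k. dist (A k) a < m) sequentially"
    by (rule tendstoD[OF A_lim \<open>0 < m\<close>])
  moreover have "eventually (\<lambda>k. dist (infdist (A k) (epi_conj (G k))) (infdist a (epi_conj g)) < m) sequentially"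
    by (rule tendstoD[OF infdist_epi_conj_tendsto \<open>0 < m\<close>])
  ultimately show ?thesis
  proof eventually_elim
    case (elim k)
    then obtain w where w: "w \<in> epi_conj (G k)" "dist w y < e" "dist w y < m" by auto
    have "dist (A k) w \<le> dist (A k) a + dist a y + dist w y"
      using dist_triangle[of "A k" w a] dist_triangle[of a w y] by (simp add: dist_commute)
    also have "\<dots> \<le> 2 * infdist (A k) (epi_conj (G k))"
    proof -
      have "infdist a (epi_conj g) - m < infdist (A k) (epi_conj (G k))"
        using elim(3) by (simp add: dist_real_def abs_less_iff)
      then show ?thesis using elim(2) w(3) \<open>4 * m = _\<close> by linarith
    qed
    finally have "w \<in> Phi (G k) (A k)" using w(1) by (simp add: Phi_def)
    with w(2) show ?case by blast
  qed
qed

lemma Phi_approx_degenerate: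
  assumes "infdist a (epi_conj g) = 0" "0 < e"
  shows "eventually (\<lambda>k. \<exists>y\<in>Phi (G k) (A k). dist y a < e) sequentially"
proof -
  have "eventually (\<lambda>k. dist (A k) a < e/2) sequentially"
    using tendstoD[OF A_lim, of "e/2"] \<open>0 < e\<close> by simp
  moreover have "eventually (\<lambda>k. infdist (A k) (epi_conj (G k)) < e/2) sequentially"
    using order_tendstoD(2)[OF infdist_epi_conj_tendsto, of "e/2"] assms by simp
  ultimately show ?thesis
  proof eventually_elim
    case (elim k)
    obtain y where y: "y \<in> Phi (G k) (A k)" "infdist (A k) (epi_conj (G k)) = dist (A k) y"
      using nearest_point_in_Phi[OF epi_conj_nonempty[OF convex_G cont_G]] by blast
    have "dist y a \<le> dist (A k) y + dist (A k) a"
      using dist_triangle[of y a "A k"] by (simp add: dist_commute)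
    with elim y(2) have "dist y a < e" by simp
    with y(1) show ?case by blast
  qed
qed

lemma Phi_approx:
  assumes "z \<in> Phi g a" "0 < e"
  shows "eventually (\<lambda>k. \<exists>y\<in>Phi (G k) (A k). dist y z < e) sequentially"
proof (cases "infdist a (epi_conj g) = 0")
  case True
  with assms(1) have "z = a" by (simp add: Phi_def)
  with True show ?thesis using Phi_approx_degenerate \<open>0 < e\<close> by simp
next
  case False
  obtain c where c: "c \<in> Phi g a" "infdist a (epi_conj g) = dist a c"
    using nearest_point_in_Phi[OF epi_conj_nonempty[OF convex_g cont_g]] by blast
  with False have "dist a c < 2 * infdist a (epi_conj g)"
    using infdist_nonneg[of a "epi_conj g"] by simp
  moreover have z: "z \<in> epi_conj g" "dist a z \<le> 2 * infdist a (epi_conj g)"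
    using assms(1) by (auto simp: Phi_def)
  \<comment> \<open>move z towards c, to a point strictly inside the ball of radius 2 d(a, E)\<close>
  ultimately obtain y where y: "y \<in> epi_conj g" "dist a y < 2 * infdist a (epi_conj g)" "dist y z < e/2"
    using convex_cball_approx_by_ball[OF convex_epi_conj z(1) _ _ z(2), of c "e/2"] c(1) \<open>0 < e\<close>
    by (auto simp: Phi_def)
  show ?thesis
    using Phi_approx_strict[OF y(1,2) half_gt_zero[OF \<open>0 < e\<close>]]
  proof eventually_elim
    case (elim k)
    then obtain w where w: "w \<in> Phi (G k) (A k)" "dist w y < e/2" by blast
    then have "dist w z < e" using y(3) dist_triangle[of w z y] by linarith
    with w(1) show ?case by blast
  qed
qed

lemma Phi_cluster:
  fixes r :: "nat \<Rightarrow> nat"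
  assumes "strict_mono r" "\<And>k. y k \<in> Phi (G (r k)) (A (r k))"
  shows "\<exists>q y0. strict_mono q \<and> (y \<circ> q) \<longlonglongrightarrow> y0 \<and> y0 \<in> Phi g a"
proof -
  let ?d = "\<lambda>k. infdist (A k) (epi_conj (G k))"
  have y: "y k \<in> epi_conj (G (r k))" "dist (A (r k)) (y k) \<le> 2 * ?d (r k)" for k
    using assms(2)[of k] by (auto simp: Phi_def)
  obtain B where B: "\<And>k. norm (A k) \<le> B"
    using convergent_imp_bounded[OF A_lim] by (auto simp: bounded_iff)
  obtain D where D: "\<And>k. ?d k \<le> D"
    using convergent_imp_bounded[OF infdist_epi_conj_tendsto] by (auto simp: bounded_iff abs_le_iff)
  have "norm (y k) \<le> B + 2 * D" for k
    using norm_triangle_sub[of "y k" "A (r k)"] B[of "r k"] D[of "r k"] y(2)[of k]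
    by (simp add: dist_norm norm_minus_commute)
  then have "bounded (range y)" by (auto simp: bounded_iff)
  then obtain q y0 where q: "strict_mono q" "(y \<circ> q) \<longlonglongrightarrow> y0" "y0 \<in> epi_conj g"
    using epi_conj_cluster[OF assms(1) y(1)] by blast
  have dist_lim: "(\<lambda>k. dist (A (r (q k))) (y (q k))) \<longlonglongrightarrow> dist a y0"
    using LIMSEQ_subseq_LIMSEQ[OF A_lim strict_mono_o[OF assms(1) q(1)]] q(2)
    by (auto simp: o_def intro!: tendsto_dist)
  have radius_lim: "(\<lambda>k. 2 * ?d (r (q k))) \<longlonglongrightarrow> 2 * infdist a (epi_conj g)"
    using LIMSEQ_subseq_LIMSEQ[OF infdist_epi_conj_tendsto strict_mono_o[OF assms(1) q(1)]]
    by (auto simp: o_def intro!: tendsto_mult_left)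
  have "dist a y0 \<le> 2 * infdist a (epi_conj g)"
    by (rule tendsto_le[OF trivial_limit_sequentially radius_lim dist_lim]) (simp add: y(2))
  with q have "y0 \<in> Phi g a" by (simp add: Phi_def)
  with q show ?thesis by blast
qed

lemma steiner_point_Phi_tendsto:
  "(\<lambda>k. steiner_point (Phi (G k) (A k))) \<longlonglongrightarrow> steiner_point (Phi g a)"
proof (rule steiner_point_tendsto)
  show "Phi (G k) (A k) \<noteq> {}" for k by (intro Phi_nonempty epi_conj_nonempty convex_G cont_G)
  show "Phi g a \<noteq> {}" by (intro Phi_nonempty epi_conj_nonempty convex_g cont_g)
  show "eventually (\<lambda>k. hausdorff_close (Phi (G k) (A k)) (Phi g a) e) sequentially" if "0 < e" for e
    using compact_Phi Phi_approx Phi_cluster that by (rule eventually_hausdorff_close)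
qed (rule compact_Phi)+

end

end

section \<open>Uniform convergence on compact sets\<close>

lemma uniform_limit_compact_seqI:
  fixes F :: "nat \<Rightarrow> 'b::metric_space \<Rightarrow> 'c::metric_space"
  assumes "compact K"
    and seq: "\<And>(r :: nat \<Rightarrow> nat) z z0. strict_mono r \<Longrightarrow> (\<And>k. z k \<in> K) \<Longrightarrow> z \<longlonglongrightarrow> z0 \<Longrightarrow> z0 \<in> K \<Longrightarrow>
      (\<lambda>k. dist (F (r k) (z k)) (f (z k))) \<longlonglongrightarrow> 0"
  shows "uniform_limit K F f sequentially"
proof (rule uniform_limitI, rule ccontr)
  fix e :: real
  assume "0 < e" and contra: "\<not> eventually (\<lambda>n. \<forall>z\<in>K. dist (F n z) (f z) < e) sequentially"
  obtain r :: "nat \<Rightarrow> nat" where r: "strict_mono r" "\<forall>k. \<not> (\<forall>z\<in>K. dist (F (r k) z) (f z) < e)"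
    using not_eventually_sequentiallyD[OF contra] by blast
  then obtain z where z: "\<And>k. z k \<in> K" "\<And>k. e \<le> dist (F (r k) (z k)) (f (z k))"
    by (metis not_less)
  obtain z0 q where q: "z0 \<in> K" "strict_mono q" "(z \<circ> q) \<longlonglongrightarrow> z0"
    using seq_compactE[OF compact_imp_seq_compact[OF assms(1)]] z(1) by metis
  have "(\<lambda>k. dist (F (r (q k)) (z (q k))) (f (z (q k)))) \<longlonglongrightarrow> 0"
    using seq[OF strict_mono_o[OF r(1) q(2)] _ q(3,1)] z(1) by (simp add: o_def)
  then obtain k where "dist (F (r (q k)) (z (q k))) (f (z (q k))) < e"
    using eventually_happens'[OF trivial_limit_sequentially order_tendstoD(2)] \<open>0 < e\<close> by blast
  with z(2)[of "q k"] show False by simp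
qed

lemma uniform_limit_compose_uniform_limit:
  fixes F :: "nat \<Rightarrow> 'b::metric_space \<Rightarrow> 'c::metric_space"
  assumes F: "uniform_limit C F f sequentially" and f: "uniformly_continuous_on C f"
    and u: "uniform_limit P u u0 sequentially" and "\<And>k. u k ` P \<subseteq> C" and "u0 ` P \<subseteq> C"
  shows "uniform_limit P (\<lambda>k p. F k (u k p)) (\<lambda>p. f (u0 p)) sequentially"
proof (rule uniform_limitI)
  fix e :: real assume "0 < e"
  have "eventually (\<lambda>k. \<forall>x\<in>C. dist (F k x) (f x) < e/2) sequentially"
    using uniform_limitD[OF F, of "e/2"] \<open>0 < e\<close> by simp
  moreover have "eventually (\<lambda>k. \<forall>p\<in>P. dist (f (u k p)) (f (u0 p)) < e/2) sequentially"
    using uniform_limitD[OF uniform_limit_compose[OF u f _ assms(5)], of "e/2"] assms(4) \<open>0 < e\<close>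
    by simp
  ultimately show "eventually (\<lambda>k. \<forall>p\<in>P. dist (F k (u k p)) (f (u0 p)) < e) sequentially"
  proof eventually_elim
    case (elim k)
    show ?case
    proof
      fix p assume "p \<in> P"
      then have "u k p \<in> C" using assms(4) by blast
      then have "dist (F k (u k p)) (f (u k p)) < e/2" "dist (f (u k p)) (f (u0 p)) < e/2"
        using elim \<open>p \<in> P\<close> by auto
      then show "dist (F k (u k p)) (f (u0 p)) < e"
        using dist_triangle[of "F k (u k p)" "f (u0 p)" "f (u k p)"] by linarith
    qed
  qed
qed

lemma hyp_H_convex: "hyp_H T H \<Longrightarrow> t \<in> {0..T} \<Longrightarrow> convex_on UNIV (H t x)"
  unfolding hyp_H_def by blast

lemma hyp_H_continuous:
  assumes "hyp_H T H" "t \<in> {0..T}"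
  shows "continuous_on UNIV (H t x)"
proof -
  have "continuous_on UNIV (\<lambda>(x, p). H t x p)" using assms by (simp add: hyp_H_def)
  then have "continuous_on UNIV ((\<lambda>(x, p). H t x p) \<circ> Pair x)"
    by (intro continuous_on_compose continuous_intros) (rule continuous_on_subset, auto)
  then show ?thesis by (simp add: o_def)
qed

lemma uniform_limit_cball_along_convergent:
  fixes F :: "nat \<Rightarrow> real \<Rightarrow> 'a::euclidean_space \<Rightarrow> 'a \<Rightarrow> real"
  assumes F: "\<And>C. C \<subseteq> {0..T} \<times> UNIV \<times> UNIV \<Longrightarrow> compact C \<Longrightarrow>
      uniform_limit C (\<lambda>k (t, x, p). F k t x p) (\<lambda>(t, x, p). H t x p) sequentially"
    and H: "continuous_on ({0..T} \<times> UNIV \<times> UNIV) (\<lambda>(t, x, p). H t x p)"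
    and S: "compact S" "S \<subseteq> {0..T} \<times> UNIV" "\<And>k. (t k, x k) \<in> S" "(t0, x0) \<in> S"
    and lim: "(\<lambda>k. (t k, x k)) \<longlonglongrightarrow> (t0, x0)"
  shows "uniform_limit (cball 0 R) (\<lambda>k. F k (t k) (x k)) (H t0 x0) sequentially"
proof -
  define C where "C = (\<lambda>((t, x), p). (t, x, p)) ` (S \<times> cball (0::'a) R)"
  have "compact C"
    unfolding C_def case_prod_unfold
    by (intro compact_continuous_image compact_Times S(1) compact_cball continuous_intros)
  moreover have C: "C \<subseteq> {0..T} \<times> UNIV \<times> UNIV" using S(2) by (auto simp: C_def)
  ultimately have "uniformly_continuous_on C (\<lambda>(t, x, p). H t x p)"
    by (intro compact_uniformly_continuous continuous_on_subset[OF H])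
  moreover have "uniform_limit (cball (0::'a) R) (\<lambda>k p. (t k, x k, p)) (\<lambda>p. (t0, x0, p)) sequentially"
  proof (rule uniform_limitI)
    fix e :: real assume "0 < e"
    show "eventually (\<lambda>k. \<forall>p\<in>cball 0 R. dist (t k, x k, p) (t0, x0, p) < e) sequentially"
      using tendstoD[OF lim \<open>0 < e\<close>] by eventually_elim (simp add: dist_Pair_Pair)
  qed
  moreover have "(t k, x k, p) \<in> C" "(t0, x0, p) \<in> C" if "p \<in> cball 0 R" for k p
    using that S(3,4) unfolding C_def by force+
  ultimately show ?thesis
    using uniform_limit_compose_uniform_limit[OF F[OF C \<open>compact C\<close>]] by fastforce
qed

lemma steiner_e_tendsto:
  fixes F :: "nat \<Rightarrow> real \<Rightarrow> 'a::euclidean_space \<Rightarrow> 'a \<Rightarrow> real"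
  assumes F: "\<And>C. C \<subseteq> {0..T} \<times> UNIV \<times> UNIV \<Longrightarrow> compact C \<Longrightarrow>
      uniform_limit C (\<lambda>k (t, x, p). F k t x p) (\<lambda>(t, x, p). H t x p) sequentially"
    and cont_H: "continuous_on ({0..T} \<times> UNIV \<times> UNIV) (\<lambda>(t, x, p). H t x p)"
    and hyp_F: "\<And>k. hyp_H T (F k)" and hyp_H: "hyp_H T H"
    and K: "compact K" "K \<subseteq> {0..T} \<times> UNIV \<times> UNIV" "\<And>k. (t k, x k, a k) \<in> K" "(t0, x0, a0) \<in> K"
    and lim: "(\<lambda>k. (t k, x k, a k)) \<longlonglongrightarrow> (t0, x0, a0)"
  shows "(\<lambda>k. steiner_e (F k) (t k) (x k) (a k)) \<longlonglongrightarrow> steiner_e H t0 x0 a0"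
  unfolding steiner_e_eq_steiner_point_Phi
proof (rule steiner_point_Phi_tendsto)
  have t: "t k \<in> {0..T}" "t0 \<in> {0..T}" for k using K(2) K(3)[of k] K(4) by auto
  then show "convex_on UNIV (F k (t k) (x k))" "continuous_on UNIV (F k (t k) (x k))" for k
    by (simp_all add: hyp_H_convex[OF hyp_F] hyp_H_continuous[OF hyp_F])
  show "convex_on UNIV (H t0 x0)" "continuous_on UNIV (H t0 x0)"
    using t by (simp_all add: hyp_H_convex[OF hyp_H] hyp_H_continuous[OF hyp_H])
  show "uniform_limit (cball 0 R) (\<lambda>k. F k (t k) (x k)) (H t0 x0) sequentially" for R
  proof (rule uniform_limit_cball_along_convergent[OF F cont_H])
    show "compact ((\<lambda>(t, x, a). (t, x)) ` K)"
      unfolding case_prod_unfold by (intro compact_continuous_image K(1) continuous_intros)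
    show "(\<lambda>(t, x, a). (t, x)) ` K \<subseteq> {0..T} \<times> UNIV" using K(2) by auto
    show "(t k, x k) \<in> (\<lambda>(t, x, a). (t, x)) ` K" "(t0, x0) \<in> (\<lambda>(t, x, a). (t, x)) ` K" for k
      using K(3,4) by force+
    show "(\<lambda>k. (t k, x k)) \<longlonglongrightarrow> (t0, x0)"
      using tendsto_fst[OF lim] tendsto_fst[OF tendsto_snd[OF lim]] by (auto intro: tendsto_Pair)
  qed
  show "a \<longlonglongrightarrow> a0" using tendsto_snd[OF tendsto_snd[OF lim]] by simp
qed

lemma uniform_limit_steiner_e:
  fixes Hs :: "nat \<Rightarrow> real \<Rightarrow> 'a::euclidean_space \<Rightarrow> 'a \<Rightarrow> real"
  assumes conv: "\<And>C. C \<subseteq> {0..T} \<times> UNIV \<times> UNIV \<Longrightarrow> compact C \<Longrightarrow>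
      uniform_limit C (\<lambda>i (t, x, p). Hs i t x p) (\<lambda>(t, x, p). H t x p) sequentially"
    and cont_H: "continuous_on ({0..T} \<times> UNIV \<times> UNIV) (\<lambda>(t, x, p). H t x p)"
    and hyp_Hs: "\<And>i. hyp_H T (Hs i)" and hyp_H: "hyp_H T H"
    and K: "K \<subseteq> {0..T} \<times> UNIV \<times> UNIV" "compact K"
  shows "uniform_limit K (\<lambda>i (t, x, a). steiner_e (Hs i) t x a) (\<lambda>(t, x, a). steiner_e H t x a) sequentially"
proof (rule uniform_limit_compact_seqI[OF K(2)])
  fix r :: "nat \<Rightarrow> nat" and z :: "nat \<Rightarrow> real \<times> 'a \<times> 'a \<times> real" and z0
  assume r: "strict_mono r" and z: "\<And>k. z k \<in> K" "z \<longlonglongrightarrow> z0" "z0 \<in> K"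
  define t x a where "t k = fst (z k)" and "x k = fst (snd (z k))" and "a k = snd (snd (z k))" for k
  have z_eq: "z = (\<lambda>k. (t k, x k, a k))" by (simp add: t_def x_def a_def)
  obtain t0 x0 a0 where z0_eq: "z0 = (t0, x0, a0)" by (cases z0)
  have Hs_r: "uniform_limit C (\<lambda>k (t, x, p). Hs (r k) t x p) (\<lambda>(t, x, p). H t x p) sequentially"
    if "C \<subseteq> {0..T} \<times> UNIV \<times> UNIV" "compact C" for C
    using filterlim_compose[OF conv[OF that] filterlim_subseq[OF r]] by (simp add: o_def)
  have "(\<lambda>k. steiner_e (Hs (r k)) (t k) (x k) (a k)) \<longlonglongrightarrow> steiner_e H t0 x0 a0"
    using z by (intro steiner_e_tendsto[OF Hs_r cont_H hyp_Hs hyp_H K(2,1)]) (auto simp: z_eq z0_eq)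
  moreover have "(\<lambda>k. steiner_e H (t k) (x k) (a k)) \<longlonglongrightarrow> steiner_e H t0 x0 a0"
    using z by (intro steiner_e_tendsto[OF uniform_limit_const cont_H hyp_H hyp_H K(2,1)])
      (auto simp: z_eq z0_eq)
  ultimately have "(\<lambda>k. dist (steiner_e (Hs (r k)) (t k) (x k) (a k)) (steiner_e H (t k) (x k) (a k)))
      \<longlonglongrightarrow> dist (steiner_e H t0 x0 a0) (steiner_e H t0 x0 a0)"
    by (rule tendsto_dist)
  then show "(\<lambda>k. dist ((\<lambda>(t, x, a). steiner_e (Hs (r k)) t x a) (z k))
      ((\<lambda>(t, x, a). steiner_e H t x a) (z k))) \<longlonglongrightarrow> 0"
    by (simp add: z_eq)
qed

theorem theorem4p2:
  fixes T :: real
    and Hs :: "nat \<Rightarrow> real \<Rightarrow> 'a::euclidean_space \<Rightarrow> 'a \<Rightarrow> real"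
    and H :: "real \<Rightarrow> 'a \<Rightarrow> 'a \<Rightarrow> real"
  assumes cont_Hs: "\<And>i. continuous_on ({0..T} \<times> UNIV \<times> UNIV) (\<lambda>(t, x, p). Hs i t x p)"
    and cont_H: "continuous_on ({0..T} \<times> UNIV \<times> UNIV) (\<lambda>(t, x, p). H t x p)"
    and hyp_Hs: "\<And>i. hyp_H T (Hs i)"
    and hyp_H: "hyp_H T H"
    and conv: "\<And>K. K \<subseteq> {0..T} \<times> UNIV \<times> UNIV \<Longrightarrow> compact K \<Longrightarrow>
       uniform_limit K (\<lambda>i (t, x, p). Hs i t x p) (\<lambda>(t, x, p). H t x p) sequentially"
  shows "\<forall>K. K \<subseteq> {0..T} \<times> UNIV \<times> UNIV \<longrightarrow> compact K \<longrightarrow>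
       uniform_limit K (\<lambda>i (t, x, a). steiner_f (Hs i) t x a) (\<lambda>(t, x, a). steiner_f H t x a) sequentially
     \<and> uniform_limit K (\<lambda>i (t, x, a). steiner_l (Hs i) t x a) (\<lambda>(t, x, a). steiner_l H t x a) sequentially"
proof (intro allI impI)
  fix K :: "(real \<times> 'a \<times> 'a \<times> real) set"
  assume "K \<subseteq> {0..T} \<times> UNIV \<times> UNIV" "compact K"
  from uniform_limit_steiner_e[OF conv cont_H hyp_Hs hyp_H this]
  have e_lim: "uniform_limit K (\<lambda>i (t, x, a). steiner_e (Hs i) t x a) (\<lambda>(t, x, a). steiner_e H t x a)
      sequentially" .
  show "uniform_limit K (\<lambda>i (t, x, a). steiner_f (Hs i) t x a) (\<lambda>(t, x, a). steiner_f H t x a) sequentially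
     \<and> uniform_limit K (\<lambda>i (t, x, a). steiner_l (Hs i) t x a) (\<lambda>(t, x, a). steiner_l H t x a) sequentially"
    unfolding steiner_f_def steiner_l_def
    using bounded_linear.uniform_limit[OF bounded_linear_fst e_lim]
      bounded_linear.uniform_limit[OF bounded_linear_snd e_lim]
    by (simp add: case_prod_beta')
qed

end
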